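(* Let $g:[0,\infty)\to[0,\infty)$ be a function with $g(x)\to\infty$ as $x\to\infty$, and let $h,h':[0,\infty)\to[0,\infty)$ be slowly varying functions. Then there exists $f:[0,\infty)\to[0,\infty)$ such that $\lim_{x\to\infty}f(x)=\infty$, $\lim_{x\to\infty}f(x)/x=0$, $\lim_{x\to\infty}f(x)g(x)/x=\infty$, and $$\lim_{x\to\infty}\frac{h(x)}{h(f(x))}=1,\qquad \lim_{x\to\infty}\frac{h'(x)}{h'(f(x))}=1.$$
   Context: A function $h$ is slowly varying if $h(\lambda x)/h(x)\to1$ as $x\to\infty$ for every $\lambda>0$. *)

theory Defs
  imports "HOL-Analysis.Analysis"
begin

definition slowly_varying :: "(real \<Rightarrow> real) \<Rightarrow> bool" where
  "slowly_varying h \<longleftrightarrow> (\<forall>c>0. ((\<lambda>x. h (c * x) / h x) \<longlongrightarrow> 1) at_top)"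

end

theory Submission
  imports Defs
begin

(* For each c > 0, slow variation makes h(x)/h(x/c) and h'(x)/h'(x/c) lie within 1/c of 1 for
   all large x, and also c^2 \<le> x and c^2 \<le> g(x) for all large x.  A diagonal choice c = m(x)
   tending to infinity slowly enough that all these hold at x itself gives f(x) = x / m(x): then
   x/m and f g / x = g/m are at least m, and the ratios are within 1/m of 1. *)

lemma eventually_diagonal_at_top:
  fixes P :: "nat \<Rightarrow> real \<Rightarrow> bool"
  assumes "\<And>n. eventually (P n) at_top"
  obtains k :: "real \<Rightarrow> nat"
  where "filterlim k at_top at_top" and "eventually (\<lambda>x. P (k x) x) at_top"
proof -
  obtain X where X: "\<And>n x. x \<ge> X n \<Longrightarrow> P n x"
    using assms unfolding eventually_at_top_linorder by metis
  \<comment> \<open>Raising the thresholds to at least n leaves only finitely many below any x.\<close>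
  define Y where "Y n = max (X n) (real n)" for n
  define k where "k x = Max {n. Y n \<le> x}" for x
  have finite: "finite {n. Y n \<le> x}" for x
  proof (rule finite_subset)
    show "{n. Y n \<le> x} \<subseteq> {..nat \<lceil>x\<rceil>}"
      by (auto simp: Y_def le_nat_iff intro!: le_ceiling_iff[THEN iffD2])
  qed simp
  have k_ge: "n \<le> k x" if "x \<ge> Y n" for n x
    using finite that by (auto simp: k_def intro: Max_ge)
  have "filterlim k at_top at_top"
    unfolding filterlim_at_top
    using k_ge by (metis (mono_tags) eventually_at_top_linorder)
  moreover have "eventually (\<lambda>x. P (k x) x) at_top"
    using eventually_ge_at_top[of "Y 0"]
  proof eventually_elim
    case (elim x)
    then have "k x \<in> {n. Y n \<le> x}"
      unfolding k_def using finite by (intro Max_in) auto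
    then show ?case by (auto simp: Y_def intro: X)
  qed
  ultimately show thesis by (rule that)
qed

lemma eventually_diagonal_at_top_pos:
  fixes Q :: "real \<Rightarrow> real \<Rightarrow> bool"
  assumes "\<And>c. c > 0 \<Longrightarrow> eventually (Q c) at_top"
  obtains m :: "real \<Rightarrow> real"
  where "filterlim m at_top at_top" and "\<And>x. m x > 0" and "eventually (\<lambda>x. Q (m x) x) at_top"
proof -
  obtain k where "filterlim k at_top at_top" and "eventually (\<lambda>x. Q (real (Suc (k x))) x) at_top"
    using eventually_diagonal_at_top[of "\<lambda>n. Q (real (Suc n))"] assms by auto
  moreover from this(1) have "filterlim (\<lambda>x. real (Suc (k x))) at_top at_top"
    by (rule filterlim_compose[OF filterlim_real_sequentially filterlim_compose[OF filterlim_Suc]])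
  ultimately show thesis
    using that[of "\<lambda>x. real (Suc (k x))"] by simp
qed

lemma slowly_varying_eventually_close:
  assumes "slowly_varying h" and "c > 0"
  shows "eventually (\<lambda>x. dist (h x / h (x / c)) 1 < 1 / c) at_top"
proof -
  have "((\<lambda>x. h (inverse c * x) / h x) \<longlongrightarrow> 1) at_top"
    using assms by (simp add: slowly_varying_def)
  from tendsto_inverse[OF this] have "((\<lambda>x. h x / h (x / c)) \<longlongrightarrow> 1) at_top"
    by (simp add: divide_inverse_commute mult.commute)
  then show ?thesis
    by (rule tendstoD) (simp add: assms(2))
qed

lemma tendsto_if_dist_le_inverse:
  fixes m :: "'a \<Rightarrow> real"
  assumes "filterlim m at_top F" and "eventually (\<lambda>x. dist (u x) l \<le> 1 / m x) F"
  shows "(u \<longlongrightarrow> l) F"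
proof (rule tendsto_dist_iff[THEN iffD2], rule Lim_null_comparison)
  show "eventually (\<lambda>x. norm (dist (u x) l) \<le> 1 / m x) F"
    using assms(2) by simp
  show "((\<lambda>x. 1 / m x) \<longlongrightarrow> 0) F"
    using tendsto_inverse_0_at_top[OF assms(1)] by (simp add: inverse_eq_divide)
qed

lemma filterlim_divide_at_top_if_square_le:
  fixes m u :: "'a \<Rightarrow> real"
  assumes "filterlim m at_top F" and "eventually (\<lambda>x. m x ^ 2 \<le> u x) F"
  shows "filterlim (\<lambda>x. u x / m x) at_top F"
proof (rule filterlim_at_top_mono[OF assms(1)])
  show "eventually (\<lambda>x. m x \<le> u x / m x) F"
    using assms(2) assms(1)[unfolded filterlim_at_top_dense, rule_format, of 0]
  proof eventually_elim
    case (elim x)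
    then show ?case by (simp add: pos_le_divide_eq power2_eq_square)
  qed
qed

theorem lemma1:
  fixes g h h' :: "real \<Rightarrow> real"
  assumes g_nonneg: "\<forall>x\<ge>0. g x \<ge> 0"
    and g_lim: "filterlim g at_top at_top"
    and h_nonneg: "\<forall>x\<ge>0. h x \<ge> 0"
    and h'_nonneg: "\<forall>x\<ge>0. h' x \<ge> 0"
    and h_sv: "slowly_varying h"
    and h'_sv: "slowly_varying h'"
  shows "\<exists>f :: real \<Rightarrow> real. (\<forall>x\<ge>0. f x \<ge> 0)
           \<and> filterlim f at_top at_top
           \<and> ((\<lambda>x. f x / x) \<longlongrightarrow> 0) at_top
           \<and> filterlim (\<lambda>x. f x * g x / x) at_top at_top
           \<and> ((\<lambda>x. h x / h (f x)) \<longlongrightarrow> 1) at_top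
           \<and> ((\<lambda>x. h' x / h' (f x)) \<longlongrightarrow> 1) at_top"
proof -
  define Q where "Q c x \<longleftrightarrow> dist (h x / h (x / c)) 1 < 1 / c
      \<and> dist (h' x / h' (x / c)) 1 < 1 / c \<and> c ^ 2 \<le> x \<and> c ^ 2 \<le> g x" for c x
  have "eventually (Q c) at_top" if "c > 0" for c
    using slowly_varying_eventually_close[OF h_sv that] slowly_varying_eventually_close[OF h'_sv that]
      eventually_ge_at_top[of "c ^ 2"] g_lim[unfolded filterlim_at_top, rule_format, of "c ^ 2"]
    unfolding Q_def by eventually_elim blast
  then obtain m where m_lim: "filterlim m at_top at_top" and m_pos: "\<And>x. m x > 0"
    and m_Q: "eventually (\<lambda>x. Q (m x) x) at_top"
    using eventually_diagonal_at_top_pos by blast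
  define f where "f x = x / m x" for x
  have m_inverse_lim: "((\<lambda>x. 1 / m x) \<longlongrightarrow> 0) at_top"
    using tendsto_inverse_0_at_top[OF m_lim] by (simp add: inverse_eq_divide)
  have g_div_m_lim: "filterlim (\<lambda>x. g x / m x) at_top at_top"
    using m_Q
    by (auto intro!: filterlim_divide_at_top_if_square_le[OF m_lim] elim: eventually_mono simp: Q_def)
  have f_div_eq: "eventually (\<lambda>x. 1 / m x = f x / x) at_top"
    using eventually_gt_at_top[of 0] by eventually_elim (simp add: f_def)
  have fg_div_eq: "eventually (\<lambda>x. g x / m x = f x * g x / x) at_top"
    using eventually_gt_at_top[of 0] by eventually_elim (simp add: f_def)
  show ?thesis
  proof (intro exI conjI)
    show "\<forall>x\<ge>0. f x \<ge> 0"
      using m_pos by (simp add: f_def less_imp_le)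
    show "((\<lambda>x. f x / x) \<longlongrightarrow> 0) at_top"
      using tendsto_cong[OF f_div_eq] m_inverse_lim by blast
    show "filterlim (\<lambda>x. f x * g x / x) at_top at_top"
      using filterlim_cong[OF refl refl fg_div_eq] g_div_m_lim by blast
    show "filterlim f at_top at_top"
      unfolding f_def using m_Q
      by (auto intro!: filterlim_divide_at_top_if_square_le[OF m_lim] elim: eventually_mono simp: Q_def)
    show "((\<lambda>x. h x / h (f x)) \<longlongrightarrow> 1) at_top" "((\<lambda>x. h' x / h' (f x)) \<longlongrightarrow> 1) at_top"
      unfolding f_def using m_Q
      by (auto intro!: tendsto_if_dist_le_inverse[OF m_lim] elim: eventually_mono simp: Q_def)
  qed
qed

end
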